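(* Let $O_1,O_2$ be Hermitian operators on $\mathcal H$. Then $|\tilde\Xi_{O_1,O_2}\cdot\Xi_{O_1,O_2}|\le\|\tilde\Xi_{O_1,O_2}\|_2^2=\|\Xi_{O_1,O_2}\|_2^2$. If moreover $\rho$ is a density operator and $O$ is traceless Hermitian, then $$|\tilde\Xi_{\rho,O}\cdot\Xi_{\rho,O}|\le\|\tilde\Xi_{\rho,O}\|_2^2=\|\Xi_{\rho,O}\|_2^2\le\|\Xi_O^2\|_{[d]}\le\|\Xi_O\|_2^2=d\|O\|_2^2.$$
   Context: $n\ge1$, $d=2^n$, $\mathcal H=(\mathbb C^2)^{\otimes n}$, $\overline{\mathcal P}_n=\{I,X,Y,Z\}^{\otimes n}$. For operators $A,B$ define functions on $\overline{\mathcal P}_n$ regarded as vectors in $\mathbb R^{d^2}$ (Euclidean norm, standard inner product $\cdot$): $\Xi_A(P)=\operatorname{tr}(AP)$, $\Xi_{A,B}(P)=\operatorname{tr}(AP)\operatorname{tr}(BP)$, $\tilde\Xi_{A,B}(P)=\operatorname{tr}(APBP)$. $\|\Xi_O^2\|_{[d]}$ is the sum of the $d$ largest values of $\Xi_O(P)^2$; $\|O\|_2$ is the Hilbert–Schmidt norm. *)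

theory Defs
  imports "HOL-Analysis.Analysis" "Jordan_Normal_Form.Matrix"
begin

datatype pauli = PI | PX | PY | PZ

definition sigma :: "pauli \<Rightarrow> complex mat" where
  "sigma p = (case p of
      PI \<Rightarrow> mat 2 2 (\<lambda>(i,j). if i = j then 1 else 0)
    | PX \<Rightarrow> mat 2 2 (\<lambda>(i,j). if i \<noteq> j then 1 else 0)
    | PY \<Rightarrow> mat 2 2 (\<lambda>(i,j). if i = 0 \<and> j = 1 then - \<i> else if i = 1 \<and> j = 0 then \<i> else 0)
    | PZ \<Rightarrow> mat 2 2 (\<lambda>(i,j). if i = j then (if i = 0 then 1 else -1) else 0))"

definition kron :: "complex mat \<Rightarrow> complex mat \<Rightarrow> complex mat" where
  "kron A B = mat (dim_row A * dim_row B) (dim_col A * dim_col B)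
     (\<lambda>(i,j). A $$ (i div dim_row B, j div dim_col B) * B $$ (i mod dim_row B, j mod dim_col B))"

fun pauli_mat :: "pauli list \<Rightarrow> complex mat" where
  "pauli_mat [] = 1\<^sub>m 1"
| "pauli_mat (p # ps) = kron (sigma p) (pauli_mat ps)"

definition paulis :: "nat \<Rightarrow> pauli list set" where
  "paulis n = {ps. length ps = n}"

definition tr :: "complex mat \<Rightarrow> complex" where
  "tr A = (\<Sum>i<dim_row A. A $$ (i,i))"

definition hermitian :: "nat \<Rightarrow> complex mat \<Rightarrow> bool" where
  "hermitian d A \<longleftrightarrow> A \<in> carrier_mat d d \<and> (\<forall>i<d. \<forall>j<d. A $$ (i,j) = cnj (A $$ (j,i)))"

definition psd :: "nat \<Rightarrow> complex mat \<Rightarrow> bool" where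
  "psd d A \<longleftrightarrow> A \<in> carrier_mat d d \<and> (\<forall>v \<in> carrier_vec d. 0 \<le> Re ((A *\<^sub>v v) \<bullet>c v))"

definition density :: "nat \<Rightarrow> complex mat \<Rightarrow> bool" where
  "density d \<rho> \<longleftrightarrow> hermitian d \<rho> \<and> psd d \<rho> \<and> tr \<rho> = 1"

(* \<Xi>_A(P) = tr(AP); real for Hermitian A *)
definition Xi :: "complex mat \<Rightarrow> pauli list \<Rightarrow> real" where
  "Xi A P = Re (tr (A * pauli_mat P))"

definition Xi2 :: "complex mat \<Rightarrow> complex mat \<Rightarrow> pauli list \<Rightarrow> real" where
  "Xi2 A B P = Re (tr (A * pauli_mat P) * tr (B * pauli_mat P))"

definition Xit :: "complex mat \<Rightarrow> complex mat \<Rightarrow> pauli list \<Rightarrow> real" where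
  "Xit A B P = Re (tr (A * pauli_mat P * B * pauli_mat P))"

definition pdot :: "nat \<Rightarrow> (pauli list \<Rightarrow> real) \<Rightarrow> (pauli list \<Rightarrow> real) \<Rightarrow> real" where
  "pdot n f g = (\<Sum>P\<in>paulis n. f P * g P)"

definition pnorm :: "nat \<Rightarrow> (pauli list \<Rightarrow> real) \<Rightarrow> real" where
  "pnorm n f = sqrt (\<Sum>P\<in>paulis n. (f P)^2)"

definition top_sum :: "nat \<Rightarrow> ('a \<Rightarrow> real) \<Rightarrow> 'a set \<Rightarrow> real" where
  "top_sum k f S = Max {(\<Sum>x\<in>T. f x) | T. T \<subseteq> S \<and> card T = k}"

definition hs_norm :: "complex mat \<Rightarrow> real" where
  "hs_norm A = sqrt (\<Sum>i<dim_row A. \<Sum>j<dim_col A. (cmod (A $$ (i,j)))^2)"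

end

theory Submission
  imports Defs
begin

text \<open>Conjugating a Pauli string \<open>Q\<close> by a Pauli string \<open>P\<close> only changes its sign,
  \<open>P Q P = \<chi>(P,Q) Q\<close>. Expanding \<open>PBP\<close> in the Pauli basis, with the completeness relation
  \<open>\<Sum>\<^sub>P tr(XP) tr(YP) = d tr(XY)\<close>, gives \<open>d \<tilde>\<Xi>\<^sub>A\<^sub>,\<^sub>B(P) = \<Sum>\<^sub>Q \<chi>(P,Q) \<Xi>\<^sub>A\<^sub>,\<^sub>B(Q)\<close>.
  The sign matrix \<open>\<chi>\<close> is the \<open>n\<close>-fold tensor power of a \<open>4 \<times> 4\<close> matrix with orthogonal rows
  of norm \<open>2\<close>, so \<open>\<chi>/d\<close> is orthogonal; this gives \<open>\<parallel>\<tilde>\<Xi>\<parallel> = \<parallel>\<Xi>\<parallel>\<close>, and Cauchy-Schwarz gives the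
  inequality.

  For Hermitian operators \<open>\<Xi>\<^sub>\<rho>\<^sub>,\<^sub>O = \<Xi>\<^sub>\<rho> \<Xi>\<^sub>O\<close>. For a state, \<open>|\<Xi>\<^sub>\<rho>(P)| \<le> 1\<close> because
  \<open>(1 \<plusminus> P)/2\<close> is a projection, and \<open>\<Sum>\<^sub>P \<Xi>\<^sub>\<rho>(P)\<^sup>2 = d \<parallel>\<rho>\<parallel>\<^sub>2\<^sup>2 \<le> d (tr \<rho>)\<^sup>2 = d\<close> by the
  \<open>2 \<times> 2\<close> minors of \<open>\<rho>\<close>. Hence \<open>\<parallel>\<Xi>\<^sub>\<rho>\<^sub>,\<^sub>O\<parallel>\<^sup>2\<close> is a combination of the values \<open>\<Xi>\<^sub>O(P)\<^sup>2\<close> with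
  weights in \<open>[0,1]\<close> of total mass at most \<open>d\<close>, hence at most the sum of the \<open>d\<close> largest ones.
  The last identity is the completeness relation for \<open>X = Y = O\<close>.\<close>

section \<open>Matrices and traces\<close>

lemma index_mult_mat_sum:
  assumes "A \<in> carrier_mat n m" "B \<in> carrier_mat m k" "i < n" "j < k"
  shows "(A * B) $$ (i,j) = (\<Sum>l<m. A $$ (i,l) * B $$ (l,j))"
  using assms by (auto simp: scalar_prod_def atLeast0LessThan)

lemma tr_mult:
  assumes "A \<in> carrier_mat d m" "B \<in> carrier_mat m d"
  shows "tr (A * B) = (\<Sum>a<d. \<Sum>b<m. A $$ (a,b) * B $$ (b,a))"
  using assms by (simp add: tr_def index_mult_mat_sum del: index_mult_mat(1))

lemma tr_mult_commute:
  assumes "A \<in> carrier_mat d m" "B \<in> carrier_mat m d"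
  shows "tr (A * B) = tr (B * A)"
  unfolding tr_mult[OF assms] tr_mult[OF assms(2,1)] by (subst sum.swap) (simp add: mult.commute)

lemma tr_smult: "A \<in> carrier_mat d d \<Longrightarrow> tr (c \<cdot>\<^sub>m A) = c * tr A"
  by (simp add: tr_def sum_distrib_left)

lemma tr_add: "A \<in> carrier_mat d d \<Longrightarrow> B \<in> carrier_mat d d \<Longrightarrow> tr (A + B) = tr A + tr B"
  by (simp add: tr_def sum.distrib)

lemma sum_sum_delta:
  assumes "finite A" "finite B" "a \<in> A" "b \<in> B"
  shows "(\<Sum>x\<in>A. \<Sum>y\<in>B. if x = a \<and> y = b then f x y else 0) = f a b"
proof -
  have "(\<Sum>y\<in>B. if x = a \<and> y = b then f x y else 0) = (if x = a then f x b else 0)" for x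
    using assms by (cases "x = a") simp_all
  then show ?thesis using assms by simp
qed

lemma smult_smult_mat: "a \<cdot>\<^sub>m (b \<cdot>\<^sub>m A) = (a * b) \<cdot>\<^sub>m (A :: 'a :: semigroup_mult mat)"
  by (rule eq_matI) (auto simp: mult.assoc)

lemma hermitian_index: "hermitian d A \<Longrightarrow> i < d \<Longrightarrow> j < d \<Longrightarrow> A $$ (i,j) = cnj (A $$ (j,i))"
  unfolding hermitian_def by blast

lemma hermitian_carrier: "hermitian d A \<Longrightarrow> A \<in> carrier_mat d d"
  unfolding hermitian_def by blast

section \<open>Kronecker products\<close>

lemma kron_dims [simp]:
  "dim_row (kron A B) = dim_row A * dim_row B" "dim_col (kron A B) = dim_col A * dim_col B"
  by (simp_all add: kron_def)

lemma kron_carrier: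
  "A \<in> carrier_mat a1 a2 \<Longrightarrow> B \<in> carrier_mat b1 b2 \<Longrightarrow> kron A B \<in> carrier_mat (a1 * b1) (a2 * b2)"
  by (rule carrier_matI) (simp_all only: kron_dims carrier_matD)

lemma kron_index:
  "i < dim_row A * dim_row B \<Longrightarrow> j < dim_col A * dim_col B \<Longrightarrow>
   kron A B $$ (i,j) = A $$ (i div dim_row B, j div dim_col B) * B $$ (i mod dim_row B, j mod dim_col B)"
  by (simp add: kron_def)

lemma mult_kron:
  assumes A: "A \<in> carrier_mat a1 a2" and B: "B \<in> carrier_mat b1 b2"
    and C: "C \<in> carrier_mat a2 c2" and D: "D \<in> carrier_mat b2 d2"
  shows "kron A B * kron C D = kron (A * C) (B * D)"
proof (rule eq_matI)
  fix i j assume "i < dim_row (kron (A * C) (B * D))" "j < dim_col (kron (A * C) (B * D))"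
  then have i: "i < a1 * b1" and j: "j < c2 * d2" using A B C D by auto
  moreover have "0 < b1" "0 < d2" using i j by (cases b1; cases d2; simp)+
  ultimately have i1: "i div b1 < a1" and j1: "j div d2 < c2" and i2: "i mod b1 < b1" and j2: "j mod d2 < d2"
    by (simp_all add: less_mult_imp_div_less)
  have "(kron A B * kron C D) $$ (i,j) = (\<Sum>k<a2*b2. kron A B $$ (i,k) * kron C D $$ (k,j))"
    by (rule index_mult_mat_sum[OF kron_carrier[OF A B] kron_carrier[OF C D] i j])
  also have "\<dots> = (\<Sum>k<a2*b2. (A $$ (i div b1, k div b2) * B $$ (i mod b1, k mod b2)) *
      (C $$ (k div b2, j div d2) * D $$ (k mod b2, j mod d2)))"
    using A B C D i j by (intro sum.cong) (auto simp: kron_index)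
  also have "\<dots> = (\<Sum>x<a2. \<Sum>y<b2. (A $$ (i div b1, x) * B $$ (i mod b1, y)) *
      (C $$ (x, j div d2) * D $$ (y, j mod d2)))"
    by (simp add: sum_mult_product)
  also have "\<dots> = (\<Sum>x<a2. A $$ (i div b1, x) * C $$ (x, j div d2)) *
      (\<Sum>y<b2. B $$ (i mod b1, y) * D $$ (y, j mod d2))"
    by (simp add: sum_product ac_simps)
  also have "\<dots> = (A * C) $$ (i div b1, j div d2) * (B * D) $$ (i mod b1, j mod d2)"
    by (simp add: index_mult_mat_sum[OF A C i1 j1] index_mult_mat_sum[OF B D i2 j2])
  also have "\<dots> = kron (A * C) (B * D) $$ (i,j)"
    using A B C D i j by (simp add: kron_index)
  finally show "(kron A B * kron C D) $$ (i,j) = kron (A * C) (B * D) $$ (i,j)" .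
qed (use A B C D in auto)

lemma kron_smult_left: "kron (c \<cdot>\<^sub>m A) B = c \<cdot>\<^sub>m kron A B"
  by (rule eq_matI) (auto simp: kron_def less_mult_imp_div_less)

lemma kron_smult_right: "kron A (c \<cdot>\<^sub>m B) = c \<cdot>\<^sub>m kron A B"
proof (rule eq_matI)
  fix i j assume "i < dim_row (c \<cdot>\<^sub>m kron A B)" "j < dim_col (c \<cdot>\<^sub>m kron A B)"
  then have i: "i < dim_row A * dim_row B" and j: "j < dim_col A * dim_col B" by auto
  moreover have "i mod dim_row B < dim_row B" using i by (cases "dim_row B") auto
  moreover have "j mod dim_col B < dim_col B" using j by (cases "dim_col B") auto
  ultimately show "kron A (c \<cdot>\<^sub>m B) $$ (i, j) = (c \<cdot>\<^sub>m kron A B) $$ (i, j)"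
    using i j by (simp add: kron_def)
qed auto

lemma kron_one_mat: "kron (1\<^sub>m a) (1\<^sub>m b) = 1\<^sub>m (a * b)"
proof (rule eq_matI)
  fix i j assume "i < dim_row (1\<^sub>m (a * b) :: complex mat)" "j < dim_col (1\<^sub>m (a * b) :: complex mat)"
  then have i: "i < a * b" and j: "j < a * b" by auto
  moreover have "0 < b" using i by (cases b) simp_all
  ultimately have "i div b < a" "j div b < a" "i mod b < b" "j mod b < b"
    by (simp_all add: less_mult_imp_div_less)
  moreover have "i div b = j div b \<and> i mod b = j mod b \<longleftrightarrow> i = j"
    by (metis div_mult_mod_eq)
  ultimately show "kron (1\<^sub>m a) (1\<^sub>m b) $$ (i, j) = 1\<^sub>m (a * b) $$ (i, j)"
    using i j by (auto simp: kron_def)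
qed auto

section \<open>Pauli matrices and Pauli strings\<close>

lemma sigma_carrier [simp]: "sigma p \<in> carrier_mat 2 2"
  by (cases p) (auto simp: sigma_def)

lemma dim_sigma [simp]: "dim_row (sigma p) = 2" "dim_col (sigma p) = 2"
  by (cases p; simp add: sigma_def)+

lemma less_2_cases: "(i::nat) < 2 \<longleftrightarrow> i = 0 \<or> i = 1"
  by auto

lemma sum_lessThan_2: "(\<Sum>l<(2::nat). f l) = f 0 + f 1"
  by (simp add: numeral_2_eq_2)

lemma sigma_index:
  "i < 2 \<Longrightarrow> j < 2 \<Longrightarrow> sigma p $$ (i,j) =
    (case p of PI \<Rightarrow> (if i = j then 1 else 0)
     | PX \<Rightarrow> (if i \<noteq> j then 1 else 0)
     | PY \<Rightarrow> (if i = 0 \<and> j = 1 then - \<i> else if i = 1 \<and> j = 0 then \<i> else 0)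
     | PZ \<Rightarrow> (if i = j then (if i = 0 then 1 else -1) else 0))"
  by (cases p) (auto simp: sigma_def)

lemma UNIV_pauli: "(UNIV :: pauli set) = {PI, PX, PY, PZ}"
  using pauli.exhaust by auto

lemma sum_pauli: "(\<Sum>p\<in>UNIV. f p) = f PI + f PX + f PY + f PZ"
  by (simp add: UNIV_pauli ac_simps)

lemma sigma_mult_self: "sigma p * sigma p = 1\<^sub>m 2"
proof (rule eq_matI)
  fix i j assume "i < dim_row (1\<^sub>m 2 :: complex mat)" "j < dim_col (1\<^sub>m 2 :: complex mat)"
  then have ij: "i < 2" "j < 2" by auto
  show "(sigma p * sigma p) $$ (i, j) = 1\<^sub>m 2 $$ (i, j)"
    using ij by (simp add: index_mult_mat_sum[of _ 2 2 _ 2] sum_lessThan_2 del: index_mult_mat)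
      (cases p; auto simp: less_2_cases sigma_index)
qed auto

text \<open>\<open>+1\<close> if \<open>sigma p\<close> and \<open>sigma q\<close> commute, \<open>-1\<close> if they anticommute.\<close>

definition pauli_sign :: "pauli \<Rightarrow> pauli \<Rightarrow> real" where
  "pauli_sign p q = (if p = PI \<or> q = PI \<or> p = q then 1 else -1)"

lemma sigma_conj: "sigma p * sigma q * sigma p = complex_of_real (pauli_sign p q) \<cdot>\<^sub>m sigma q"
proof (rule eq_matI)
  fix i j assume "i < dim_row (complex_of_real (pauli_sign p q) \<cdot>\<^sub>m sigma q)"
    "j < dim_col (complex_of_real (pauli_sign p q) \<cdot>\<^sub>m sigma q)"
  then have ij: "i < 2" "j < 2" by auto
  have pq: "sigma p * sigma q \<in> carrier_mat 2 2" by (rule mult_carrier_mat[OF sigma_carrier sigma_carrier])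
  show "(sigma p * sigma q * sigma p) $$ (i, j) = (complex_of_real (pauli_sign p q) \<cdot>\<^sub>m sigma q) $$ (i, j)"
    using ij
    by (simp add: index_mult_mat_sum[OF pq, of _ 2] index_mult_mat_sum[of _ 2 2 _ 2] sum_lessThan_2
        del: index_mult_mat(1))
      (cases p; cases q; auto simp: less_2_cases sigma_index pauli_sign_def)
qed auto

lemma sum_pauli_sign_mult: "(\<Sum>p\<in>UNIV. pauli_sign p q * pauli_sign p r) = (if q = r then 4 else 0)"
  unfolding sum_pauli by (cases q; cases r) (simp_all add: pauli_sign_def)

lemma hermitian_sigma: "hermitian 2 (sigma p)"
  by (auto simp: hermitian_def less_2_cases sigma_index split: pauli.splits)

lemma sum_sigma_index_mult:
  "i < 2 \<Longrightarrow> j < 2 \<Longrightarrow> k < 2 \<Longrightarrow> l < 2 \<Longrightarrow>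
   (\<Sum>p\<in>UNIV. sigma p $$ (i,j) * sigma p $$ (k,l)) = (if i = l \<and> j = k then 2 else 0)"
  by (auto simp: sum_pauli less_2_cases sigma_index)

lemma pauli_mat_carrier: "pauli_mat P \<in> carrier_mat (2 ^ length P) (2 ^ length P)"
proof (induction P)
  case (Cons p P)
  then show ?case using kron_carrier[OF sigma_carrier Cons] by simp
qed simp

lemma dim_pauli_mat [simp]:
  "dim_row (pauli_mat P) = 2 ^ length P" "dim_col (pauli_mat P) = 2 ^ length P"
  using pauli_mat_carrier[of P] by auto

lemma pauli_mat_carrier_paulis: "P \<in> paulis n \<Longrightarrow> pauli_mat P \<in> carrier_mat (2 ^ n) (2 ^ n)"
  using pauli_mat_carrier[of P] by (simp add: paulis_def)

lemma paulis_Suc: "paulis (Suc n) = (\<lambda>(p, P). p # P) ` (UNIV \<times> paulis n)"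
  by (auto simp: paulis_def image_iff length_Suc_conv)

lemma inj_on_Cons_paulis: "inj_on (\<lambda>(p, P). p # P) (UNIV \<times> paulis n)"
  by (auto simp: inj_on_def)

lemma finite_paulis: "finite (paulis n)"
proof (induction n)
  case (Suc n)
  then show ?case
    unfolding paulis_Suc by (intro finite_imageI finite_cartesian_product) (simp_all add: UNIV_pauli)
qed (simp add: paulis_def)

lemma card_paulis: "card (paulis n) = 4 ^ n"
proof (induction n)
  case (Suc n)
  have "card (paulis (Suc n)) = card ((UNIV :: pauli set) \<times> paulis n)"
    unfolding paulis_Suc by (rule card_image[OF inj_on_Cons_paulis])
  then show ?case by (simp add: card_cartesian_product UNIV_pauli Suc)
qed (simp add: paulis_def)

lemma two_pow_le_card_paulis: "2 ^ n \<le> card (paulis n)"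
  by (simp add: card_paulis power_mono)

lemma sum_paulis_Suc: "(\<Sum>P\<in>paulis (Suc n). g P) = (\<Sum>p\<in>UNIV. \<Sum>P\<in>paulis n. g (p # P))"
proof -
  have "(\<Sum>P\<in>paulis (Suc n). g P) = (\<Sum>x\<in>UNIV \<times> paulis n. g (case x of (p, P) \<Rightarrow> p # P))"
    unfolding paulis_Suc by (rule sum.reindex[OF inj_on_Cons_paulis, unfolded comp_def])
  then show ?thesis by (simp add: sum.cartesian_product split_def)
qed

lemma pauli_mat_mult_self: "pauli_mat P * pauli_mat P = 1\<^sub>m (2 ^ length P)"
proof (induction P)
  case (Cons p P)
  have "pauli_mat (p # P) * pauli_mat (p # P) = kron (sigma p * sigma p) (pauli_mat P * pauli_mat P)"
    by (simp add: mult_kron[OF sigma_carrier pauli_mat_carrier sigma_carrier pauli_mat_carrier])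
  also have "\<dots> = 1\<^sub>m (2 ^ length (p # P))"
    by (simp add: sigma_mult_self Cons kron_one_mat)
  finally show ?case .
qed simp

fun pauli_string_sign :: "pauli list \<Rightarrow> pauli list \<Rightarrow> real" where
  "pauli_string_sign (p # P) (q # Q) = pauli_sign p q * pauli_string_sign P Q"
| "pauli_string_sign _ _ = 1"

lemma pauli_mat_conj:
  "length P = length Q \<Longrightarrow>
   pauli_mat P * pauli_mat Q * pauli_mat P = complex_of_real (pauli_string_sign P Q) \<cdot>\<^sub>m pauli_mat Q"
proof (induction P Q rule: list_induct2)
  case Nil
  then show ?case by (auto intro!: eq_matI)
next
  case (Cons p P q Q)
  have Q: "pauli_mat Q \<in> carrier_mat (2 ^ length P) (2 ^ length P)"
    using Cons.hyps pauli_mat_carrier[of Q] by simp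
  have PQ: "pauli_mat P * pauli_mat Q \<in> carrier_mat (2 ^ length P) (2 ^ length P)"
    using mult_carrier_mat[OF pauli_mat_carrier Q] .
  have "pauli_mat (p # P) * pauli_mat (q # Q) * pauli_mat (p # P) =
      kron (sigma p * sigma q * sigma p) (pauli_mat P * pauli_mat Q * pauli_mat P)"
    by (simp add: mult_kron[OF sigma_carrier pauli_mat_carrier sigma_carrier Q]
        mult_kron[OF mult_carrier_mat[OF sigma_carrier sigma_carrier] PQ sigma_carrier pauli_mat_carrier])
  also have "\<dots> = complex_of_real (pauli_string_sign (p # P) (q # Q)) \<cdot>\<^sub>m pauli_mat (q # Q)"
    by (simp add: Cons.IH sigma_conj kron_smult_left kron_smult_right smult_smult_mat mult.commute)
  finally show ?case .
qed

lemma hermitian_pauli_mat: "hermitian (2 ^ length P) (pauli_mat P)"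
proof (induction P)
  case (Cons p P)
  let ?D = "2 ^ length P :: nat"
  have "pauli_mat (p # P) $$ (i,j) = cnj (pauli_mat (p # P) $$ (j,i))"
    if "i < 2 ^ length (p # P)" "j < 2 ^ length (p # P)" for i j
  proof -
    have div: "i div ?D < 2" "j div ?D < 2" and mod: "i mod ?D < ?D" "j mod ?D < ?D"
      using that by (auto simp: less_mult_imp_div_less mult.commute)
    have "sigma p $$ (i div ?D, j div ?D) = cnj (sigma p $$ (j div ?D, i div ?D))"
      using hermitian_index[OF hermitian_sigma div] .
    moreover have "pauli_mat P $$ (i mod ?D, j mod ?D) = cnj (pauli_mat P $$ (j mod ?D, i mod ?D))"
      using hermitian_index[OF Cons mod] .
    ultimately show ?thesis
      using that by (simp add: kron_index)
  qed
  then show ?case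
    using pauli_mat_carrier[of "p # P"] unfolding hermitian_def by blast
qed (simp add: hermitian_def)

lemma sum_pauli_mat_index_mult:
  assumes "i < 2 ^ n" "j < 2 ^ n" "k < 2 ^ n" "l < 2 ^ n"
  shows "(\<Sum>P\<in>paulis n. pauli_mat P $$ (i,j) * pauli_mat P $$ (k,l)) = (if i = l \<and> j = k then 2 ^ n else 0)"
  using assms
proof (induction n arbitrary: i j k l)
  case (Suc n)
  let ?D = "2 ^ n :: nat"
  have div: "i div ?D < 2" "j div ?D < 2" "k div ?D < 2" "l div ?D < 2"
    using Suc.prems by (auto simp: less_mult_imp_div_less mult.commute)
  have mod: "i mod ?D < ?D" "j mod ?D < ?D" "k mod ?D < ?D" "l mod ?D < ?D"
    by simp_all
  have "(\<Sum>P\<in>paulis (Suc n). pauli_mat P $$ (i,j) * pauli_mat P $$ (k,l)) =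
      (\<Sum>p\<in>UNIV. \<Sum>P\<in>paulis n. (sigma p $$ (i div ?D, j div ?D) * sigma p $$ (k div ?D, l div ?D)) *
        (pauli_mat P $$ (i mod ?D, j mod ?D) * pauli_mat P $$ (k mod ?D, l mod ?D)))"
    unfolding sum_paulis_Suc
    by (intro sum.cong refl) (use Suc.prems in \<open>auto simp: kron_index paulis_def\<close>)
  also have "\<dots> = (\<Sum>p\<in>UNIV. sigma p $$ (i div ?D, j div ?D) * sigma p $$ (k div ?D, l div ?D)) *
      (\<Sum>P\<in>paulis n. pauli_mat P $$ (i mod ?D, j mod ?D) * pauli_mat P $$ (k mod ?D, l mod ?D))"
    by (rule sum_product[symmetric])
  also have "\<dots> = (if i div ?D = l div ?D \<and> j div ?D = k div ?D then 2 else 0) *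
      (if i mod ?D = l mod ?D \<and> j mod ?D = k mod ?D then 2 ^ n else 0)"
    by (simp add: sum_sigma_index_mult[OF div] Suc.IH[OF mod])
  also have "\<dots> = (if i = l \<and> j = k then 2 ^ Suc n else 0)"
    by (auto, metis div_mult_mod_eq, metis div_mult_mod_eq)
  finally show ?case .
qed (simp add: paulis_def)

text \<open>The sign matrix of Pauli strings is the \<open>n\<close>-fold tensor power of the \<open>4 \<times> 4\<close> one.\<close>

lemma sum_pauli_string_sign_mult:
  "Q \<in> paulis n \<Longrightarrow> R \<in> paulis n \<Longrightarrow>
   (\<Sum>P\<in>paulis n. pauli_string_sign P Q * pauli_string_sign P R) = (if Q = R then 4 ^ n else 0)"
proof (induction n arbitrary: Q R)
  case (Suc n)
  then obtain q Q' r R' where "Q = q # Q'" "R = r # R'" "Q' \<in> paulis n" "R' \<in> paulis n"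
    by (auto simp: paulis_Suc)
  then have "(\<Sum>P\<in>paulis (Suc n). pauli_string_sign P Q * pauli_string_sign P R) =
      (\<Sum>p\<in>UNIV. pauli_sign p q * pauli_sign p r) *
      (\<Sum>P\<in>paulis n. pauli_string_sign P Q' * pauli_string_sign P R')"
    by (simp add: sum_paulis_Suc sum_product ac_simps)
  then show ?case
    using Suc.IH \<open>Q = q # Q'\<close> \<open>R = r # R'\<close> \<open>Q' \<in> paulis n\<close> \<open>R' \<in> paulis n\<close>
    by (simp add: sum_pauli_sign_mult)
qed (simp add: paulis_def)

section \<open>Expansion in the Pauli basis\<close>

lemma sum_tr_mult_pauli_mat:
  assumes X: "X \<in> carrier_mat (2 ^ n) (2 ^ n)" and Y: "Y \<in> carrier_mat (2 ^ n) (2 ^ n)"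
  shows "(\<Sum>P\<in>paulis n. tr (X * pauli_mat P) * tr (Y * pauli_mat P)) = 2 ^ n * tr (X * Y)"
proof -
  let ?d = "2 ^ n :: nat"
  have "(\<Sum>P\<in>paulis n. tr (X * pauli_mat P) * tr (Y * pauli_mat P)) =
      (\<Sum>P\<in>paulis n. \<Sum>i<?d. \<Sum>j<?d. \<Sum>k<?d. \<Sum>l<?d.
         X $$ (i,k) * Y $$ (j,l) * (pauli_mat P $$ (k,i) * pauli_mat P $$ (l,j)))"
    using X Y by (intro sum.cong refl)
      (simp add: tr_mult pauli_mat_carrier_paulis sum_product ac_simps)
  also have "\<dots> = (\<Sum>i<?d. \<Sum>j<?d. \<Sum>k<?d. \<Sum>l<?d.
      X $$ (i,k) * Y $$ (j,l) * (\<Sum>P\<in>paulis n. pauli_mat P $$ (k,i) * pauli_mat P $$ (l,j)))"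
    by (simp add: sum.swap[where A = "paulis n"] sum_distrib_left)
  also have "\<dots> = (\<Sum>i<?d. \<Sum>j<?d. \<Sum>k<?d. \<Sum>l<?d.
      if k = j \<and> l = i then X $$ (i,k) * Y $$ (k,l) * 2 ^ n else 0)"
    by (intro sum.cong refl) (auto simp: sum_pauli_mat_index_mult)
  also have "\<dots> = (\<Sum>i<?d. \<Sum>j<?d. X $$ (i,j) * Y $$ (j,i) * 2 ^ n)"
    by (intro sum.cong refl) (simp add: sum_sum_delta)
  also have "\<dots> = 2 ^ n * tr (X * Y)"
    by (simp add: tr_mult[OF X Y] sum_distrib_left ac_simps)
  finally show ?thesis .
qed

lemma tr_mult_pauli_conj:
  assumes A: "A \<in> carrier_mat (2 ^ n) (2 ^ n)" and B: "B \<in> carrier_mat (2 ^ n) (2 ^ n)"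
    and P: "P \<in> paulis n"
  shows "2 ^ n * tr (A * pauli_mat P * B * pauli_mat P) =
    (\<Sum>Q\<in>paulis n. pauli_string_sign P Q * (tr (A * pauli_mat Q) * tr (B * pauli_mat Q)))"
proof -
  let ?P = "pauli_mat P" and ?d = "2 ^ n :: nat"
  note assoc = assoc_mult_mat[of _ ?d ?d _ ?d _ ?d] mult_carrier_mat[of _ ?d ?d _ ?d]
  have cP: "?P \<in> carrier_mat (2 ^ n) (2 ^ n)" using P by (rule pauli_mat_carrier_paulis)
  have PBP: "?P * B * ?P \<in> carrier_mat (2 ^ n) (2 ^ n)" using cP B by simp
  have conj: "tr (?P * B * ?P * pauli_mat Q) = pauli_string_sign P Q * tr (B * pauli_mat Q)"
    if Q: "Q \<in> paulis n" for Q
  proof -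
    have cQ: "pauli_mat Q \<in> carrier_mat (2 ^ n) (2 ^ n)" using Q by (rule pauli_mat_carrier_paulis)
    have "tr (?P * B * ?P * pauli_mat Q) = tr (?P * (B * ?P * pauli_mat Q))"
      using cP B cQ by (simp add: assoc)
    also have "\<dots> = tr (B * ?P * pauli_mat Q * ?P)"
      using cP B cQ by (simp add: tr_mult_commute[OF cP])
    also have "\<dots> = tr (B * (?P * pauli_mat Q * ?P))"
      using cP B cQ by (simp add: assoc)
    also have "\<dots> = pauli_string_sign P Q * tr (B * pauli_mat Q)"
      using P Q B cQ by (simp add: paulis_def pauli_mat_conj mult_smult_distrib tr_smult[of _ "2 ^ n"])
    finally show ?thesis .
  qed
  have "2 ^ n * tr (A * (?P * B * ?P)) =
      (\<Sum>Q\<in>paulis n. tr (A * pauli_mat Q) * tr (?P * B * ?P * pauli_mat Q))"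
    by (rule sum_tr_mult_pauli_mat[OF A PBP, symmetric])
  also have "A * (?P * B * ?P) = A * ?P * B * ?P"
    using A B cP by (simp add: assoc)
  finally show ?thesis
    by (simp add: conj ac_simps cong: sum.cong)
qed

lemma Xit_eq_sum_Xi2:
  assumes "A \<in> carrier_mat (2 ^ n) (2 ^ n)" "B \<in> carrier_mat (2 ^ n) (2 ^ n)" "P \<in> paulis n"
  shows "2 ^ n * Xit A B P = (\<Sum>Q\<in>paulis n. pauli_string_sign P Q * Xi2 A B Q)"
proof -
  have "2 ^ n * Xit A B P = Re (2 ^ n * tr (A * pauli_mat P * B * pauli_mat P))"
    by (simp add: Xit_def)
  also have "\<dots> = (\<Sum>Q\<in>paulis n. pauli_string_sign P Q * Xi2 A B Q)"
    by (simp only: tr_mult_pauli_conj[OF assms]) (simp add: Re_sum Xi2_def)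
  finally show ?thesis .
qed

lemma sum_Xit_square:
  assumes "A \<in> carrier_mat (2 ^ n) (2 ^ n)" "B \<in> carrier_mat (2 ^ n) (2 ^ n)"
  shows "(\<Sum>P\<in>paulis n. (Xit A B P)\<^sup>2) = (\<Sum>P\<in>paulis n. (Xi2 A B P)\<^sup>2)"
proof -
  let ?v = "Xi2 A B" and ?s = pauli_string_sign
  have "(2::real) ^ n * 2 ^ n = 4 ^ n"
    by (simp flip: power_mult_distrib)
  then have "4 ^ n * (\<Sum>P\<in>paulis n. (Xit A B P)\<^sup>2) = (\<Sum>P\<in>paulis n. (2 ^ n * Xit A B P)\<^sup>2)"
    by (simp add: sum_distrib_left power2_eq_square ac_simps)
  also have "\<dots> = (\<Sum>P\<in>paulis n. (\<Sum>Q\<in>paulis n. ?s P Q * ?v Q)\<^sup>2)"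
    by (intro sum.cong refl) (simp only: Xit_eq_sum_Xi2[OF assms])
  also have "\<dots> = (\<Sum>P\<in>paulis n. \<Sum>Q\<in>paulis n. \<Sum>R\<in>paulis n. ?v Q * ?v R * (?s P Q * ?s P R))"
    unfolding power2_eq_square sum_product by (intro sum.cong refl) (simp only: mult_ac)
  also have "\<dots> = (\<Sum>Q\<in>paulis n. \<Sum>R\<in>paulis n. \<Sum>P\<in>paulis n. ?v Q * ?v R * (?s P Q * ?s P R))"
    by (subst sum.swap) (rule sum.cong[OF refl], rule sum.swap)
  also have "\<dots> = (\<Sum>Q\<in>paulis n. \<Sum>R\<in>paulis n. ?v Q * ?v R * (\<Sum>P\<in>paulis n. ?s P Q * ?s P R))"
    by (simp only: sum_distrib_left)
  also have "\<dots> = (\<Sum>Q\<in>paulis n. \<Sum>R\<in>paulis n. if Q = R then ?v Q * ?v R * 4 ^ n else 0)"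
    by (intro sum.cong refl) (simp only: sum_pauli_string_sign_mult if_distrib[of "\<lambda>x. _ * x"] mult_zero_right)
  also have "\<dots> = 4 ^ n * (\<Sum>P\<in>paulis n. (?v P)\<^sup>2)"
    by (simp add: finite_paulis sum_distrib_left power2_eq_square ac_simps)
  finally show ?thesis by simp
qed

lemma pnorm_square: "(pnorm n f)\<^sup>2 = (\<Sum>P\<in>paulis n. (f P)\<^sup>2)"
  by (simp add: pnorm_def sum_nonneg)

lemma abs_pdot_le: "\<bar>pdot n f g\<bar> \<le> pnorm n f * pnorm n g"
proof -
  have "\<bar>pdot n f g\<bar> \<le> (\<Sum>P\<in>paulis n. \<bar>f P\<bar> * \<bar>g P\<bar>)"
    unfolding pdot_def by (rule order_trans[OF sum_abs]) (simp add: abs_mult)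
  also have "\<dots> \<le> L2_set f (paulis n) * L2_set g (paulis n)"
    by (rule L2_set_mult_ineq)
  finally show ?thesis by (simp add: L2_set_def pnorm_def)
qed

lemma Xit_Xi2_bounds:
  assumes "A \<in> carrier_mat (2 ^ n) (2 ^ n)" "B \<in> carrier_mat (2 ^ n) (2 ^ n)"
  shows "\<bar>pdot n (Xit A B) (Xi2 A B)\<bar> \<le> (pnorm n (Xit A B))\<^sup>2"
    and "(pnorm n (Xit A B))\<^sup>2 = (pnorm n (Xi2 A B))\<^sup>2"
proof -
  show eq: "(pnorm n (Xit A B))\<^sup>2 = (pnorm n (Xi2 A B))\<^sup>2"
    by (simp add: pnorm_square sum_Xit_square[OF assms])
  have "pnorm n (Xi2 A B) = pnorm n (Xit A B)"
    by (simp add: pnorm_def sum_Xit_square[OF assms])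
  then show "\<bar>pdot n (Xit A B) (Xi2 A B)\<bar> \<le> (pnorm n (Xit A B))\<^sup>2"
    using abs_pdot_le[of n "Xit A B" "Xi2 A B"] by (simp add: power2_eq_square)
qed

lemma tr_mult_hermitian_real:
  assumes X: "hermitian d X" and Y: "hermitian d Y"
  shows "tr (X * Y) \<in> \<real>"
proof -
  have cX: "X \<in> carrier_mat d d" and cY: "Y \<in> carrier_mat d d"
    using X Y by (simp_all add: hermitian_carrier)
  have "cnj (tr (X * Y)) = (\<Sum>a<d. \<Sum>b<d. cnj (X $$ (a,b)) * cnj (Y $$ (b,a)))"
    by (simp add: tr_mult[OF cX cY])
  also have "\<dots> = (\<Sum>a<d. \<Sum>b<d. X $$ (b,a) * Y $$ (a,b))"
  proof (intro sum.cong refl)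
    fix a b assume "a \<in> {..<d}" "b \<in> {..<d}"
    then show "cnj (X $$ (a,b)) * cnj (Y $$ (b,a)) = X $$ (b,a) * Y $$ (a,b)"
      using hermitian_index[OF X, of b a] hermitian_index[OF Y, of a b] by simp
  qed
  also have "\<dots> = tr (X * Y)"
    by (simp add: tr_mult[OF cX cY]) (rule sum.swap)
  finally show ?thesis by (simp add: Reals_cnj_iff)
qed

lemma of_real_Xi:
  assumes "hermitian (2 ^ n) X" "P \<in> paulis n"
  shows "complex_of_real (Xi X P) = tr (X * pauli_mat P)"
  using assms tr_mult_hermitian_real[OF assms(1), of "pauli_mat P"] hermitian_pauli_mat[of P]
  by (simp add: paulis_def Xi_def of_real_Re)

lemma Xi2_eq_mult:
  assumes "hermitian (2 ^ n) A" "hermitian (2 ^ n) B" "P \<in> paulis n"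
  shows "Xi2 A B P = Xi A P * Xi B P"
  by (simp add: Xi2_def flip: of_real_Xi[OF assms(1,3)] of_real_Xi[OF assms(2,3)])

lemma hs_norm_square:
  "A \<in> carrier_mat d d \<Longrightarrow> (hs_norm A)\<^sup>2 = (\<Sum>a<d. \<Sum>b<d. (cmod (A $$ (a,b)))\<^sup>2)"
  by (simp add: hs_norm_def sum_nonneg)

lemma tr_mult_self_hermitian:
  assumes X: "hermitian d X"
  shows "tr (X * X) = complex_of_real ((hs_norm X)\<^sup>2)"
proof -
  have cX: "X \<in> carrier_mat d d" using X by (rule hermitian_carrier)
  have "tr (X * X) = (\<Sum>a<d. \<Sum>b<d. X $$ (a,b) * cnj (X $$ (a,b)))"
    unfolding tr_mult[OF cX cX]
  proof (intro sum.cong refl)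
    fix a b assume "a \<in> {..<d}" "b \<in> {..<d}"
    then show "X $$ (a,b) * X $$ (b,a) = X $$ (a,b) * cnj (X $$ (a,b))"
      using hermitian_index[OF X, of b a] by simp
  qed
  also have "\<dots> = complex_of_real ((hs_norm X)\<^sup>2)"
    by (simp only: hs_norm_square[OF cX] of_real_sum complex_norm_square)
  finally show ?thesis .
qed

lemma sum_Xi_square:
  assumes X: "hermitian (2 ^ n) X"
  shows "(\<Sum>P\<in>paulis n. (Xi X P)\<^sup>2) = 2 ^ n * (hs_norm X)\<^sup>2"
proof -
  have cX: "X \<in> carrier_mat (2 ^ n) (2 ^ n)" using X by (rule hermitian_carrier)
  have "complex_of_real (\<Sum>P\<in>paulis n. (Xi X P)\<^sup>2) =
      (\<Sum>P\<in>paulis n. tr (X * pauli_mat P) * tr (X * pauli_mat P))"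
    by (simp add: power2_eq_square of_real_Xi[OF X])
  also have "\<dots> = complex_of_real (2 ^ n * (hs_norm X)\<^sup>2)"
    by (simp add: sum_tr_mult_pauli_mat[OF cX cX] tr_mult_self_hermitian[OF X])
  finally show ?thesis by (simp only: of_real_eq_iff)
qed

section \<open>States\<close>

lemma psd_quadratic_form:
  assumes R: "psd d R" and v: "v \<in> carrier_vec d"
  shows "0 \<le> Re (\<Sum>i<d. \<Sum>j<d. R $$ (i,j) * v $ j * cnj (v $ i))"
proof -
  have "R \<in> carrier_mat d d" using R by (simp add: psd_def)
  then have "(R *\<^sub>v v) \<bullet>c v = (\<Sum>i<d. \<Sum>j<d. R $$ (i,j) * v $ j * cnj (v $ i))"
    using v by (simp add: scalar_prod_def atLeast0LessThan sum_distrib_right mult_mat_vec_def)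
  then show ?thesis using R v unfolding psd_def by metis
qed

lemma sum_if_two_points:
  assumes "finite A" "a \<in> A" "b \<in> A" "a \<noteq> b"
  shows "(\<Sum>j\<in>A. if j = a then u else if j = b then w else 0) = u + w"
proof -
  have "(\<Sum>j\<in>A. if j = a then u else if j = b then w else 0) =
      (\<Sum>j\<in>A. (if j = a then u else 0) + (if j = b then w else 0))"
    using assms(4) by (intro sum.cong refl) auto
  then show ?thesis using assms by (simp add: sum.distrib)
qed

lemma psd_two_point:
  assumes R: "psd d R" and ab: "a < d" "b < d" "a \<noteq> b"
  shows "0 \<le> Re ((R $$ (a,a) * x + R $$ (a,b) * y) * cnj x + (R $$ (b,a) * x + R $$ (b,b) * y) * cnj y)"
proof -
  define v where "v = vec d (\<lambda>k. if k = a then x else if k = b then y else 0)"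
  have v: "i < d \<Longrightarrow> v $ i = (if i = a then x else if i = b then y else 0)" for i
    by (simp add: v_def)
  have row: "(\<Sum>j<d. R $$ (i,j) * v $ j) = R $$ (i,a) * x + R $$ (i,b) * y" for i
  proof -
    have "(\<Sum>j<d. R $$ (i,j) * v $ j) =
        (\<Sum>j<d. if j = a then R $$ (i,a) * x else if j = b then R $$ (i,b) * y else 0)"
      by (intro sum.cong refl) (simp add: v_def)
    then show ?thesis using ab by (simp add: sum_if_two_points)
  qed
  have "(\<Sum>i<d. \<Sum>j<d. R $$ (i,j) * v $ j * cnj (v $ i)) =
      (\<Sum>i<d. (\<Sum>j<d. R $$ (i,j) * v $ j) * cnj (v $ i))"
    by (simp add: sum_distrib_right)
  also have "\<dots> = (\<Sum>i<d. if i = a then (R $$ (a,a) * x + R $$ (a,b) * y) * cnj x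
      else if i = b then (R $$ (b,a) * x + R $$ (b,b) * y) * cnj y else 0)"
    unfolding row by (intro sum.cong refl) (auto simp: v)
  also have "\<dots> = (R $$ (a,a) * x + R $$ (a,b) * y) * cnj x + (R $$ (b,a) * x + R $$ (b,b) * y) * cnj y"
    using ab by (simp add: sum_if_two_points)
  finally show ?thesis
    using psd_quadratic_form[OF R, of v] by (simp add: v_def)
qed

lemma psd_diag_nonneg:
  assumes R: "psd d R" and a: "a < d"
  shows "0 \<le> Re (R $$ (a,a))"
proof -
  have "(\<Sum>i<d. \<Sum>j<d. R $$ (i,j) * unit_vec d a $ j * cnj (unit_vec d a $ i)) =
      (\<Sum>i<d. \<Sum>j<d. if i = a \<and> j = a then R $$ (i,j) else 0)"
    by (intro sum.cong refl) (auto simp: unit_vec_def)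
  also have "\<dots> = R $$ (a,a)"
    using a by (simp add: sum_sum_delta)
  finally have "(\<Sum>i<d. \<Sum>j<d. R $$ (i,j) * unit_vec d a $ j * cnj (unit_vec d a $ i)) = R $$ (a,a)" .
  then show ?thesis using psd_quadratic_form[OF R, of "unit_vec d a"] by simp
qed

lemma nonneg_quadratic_imp_le:
  fixes A B s :: real
  assumes quad: "\<And>t. 0 \<le> A * t\<^sup>2 - 2 * t * s + B * s" and "0 \<le> A" "0 \<le> B" "0 \<le> s"
  shows "s \<le> A * B"
proof (cases "A = 0")
  case True
  then have "0 \<le> - s * (B + 2)"
    using quad[of "B + 1"] by (simp add: algebra_simps)
  then show ?thesis using assms by (simp add: mult_le_0_iff)
next
  case False
  then have "0 < A" using assms by simp
  then have "s * s \<le> (A * B) * s"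
    using quad[of "s / A"] by (simp add: power2_eq_square field_simps)
  then show ?thesis using \<open>0 \<le> s\<close> \<open>0 \<le> A\<close> \<open>0 \<le> B\<close>
    by (cases "s = 0") (simp_all add: mult_le_cancel_right)
qed

lemma psd_entry_bound:
  assumes H: "hermitian d R" and R: "psd d R" and a: "a < d" and b: "b < d"
  shows "(cmod (R $$ (a,b)))\<^sup>2 \<le> Re (R $$ (a,a)) * Re (R $$ (b,b))"
proof (cases "a = b")
  case True
  have "Im (R $$ (a,a)) = 0"
    using hermitian_index[OF H a a] by (metis cnj.simps(2) neg_equal_zero)
  then show ?thesis using True by (simp add: cmod_power2) (simp add: power2_eq_square)
next
  case False
  define c where "c = R $$ (b,a)"
  have rab: "R $$ (a,b) = cnj c" unfolding c_def using hermitian_index[OF H a b] .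
  have "0 \<le> Re (R $$ (a,a)) * t\<^sup>2 - 2 * t * (cmod c)\<^sup>2 + Re (R $$ (b,b)) * (cmod c)\<^sup>2" for t
    using psd_two_point[OF R a b False, of "complex_of_real t" "- c"] unfolding cmod_power2
    by (simp add: rab c_def[symmetric] power2_eq_square algebra_simps)
  then show ?thesis
    using psd_diag_nonneg[OF R a] psd_diag_nonneg[OF R b]
    by (simp add: nonneg_quadratic_imp_le rab)
qed

lemma hs_norm_square_le_tr_square:
  assumes H: "hermitian d R" and R: "psd d R"
  shows "(hs_norm R)\<^sup>2 \<le> (Re (tr R))\<^sup>2"
proof -
  have cR: "R \<in> carrier_mat d d" using H by (rule hermitian_carrier)
  have "(hs_norm R)\<^sup>2 \<le> (\<Sum>a<d. \<Sum>b<d. Re (R $$ (a,a)) * Re (R $$ (b,b)))"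
    unfolding hs_norm_square[OF cR] by (intro sum_mono psd_entry_bound[OF H R]) auto
  also have "\<dots> = (Re (tr R))\<^sup>2"
    using cR by (simp add: tr_def Re_sum power2_eq_square sum_product)
  finally show ?thesis .
qed

lemma sum_Xi_square_density_le:
  assumes "density (2 ^ n) R"
  shows "(\<Sum>P\<in>paulis n. (Xi R P)\<^sup>2) \<le> 2 ^ n"
  using assms hs_norm_square_le_tr_square[of "2 ^ n" R]
  by (simp add: density_def sum_Xi_square)

lemma psd_tr_mult_square:
  assumes R: "psd d R" and M: "hermitian d M"
  shows "0 \<le> Re (tr (R * (M * M)))"
proof -
  have cR: "R \<in> carrier_mat d d" using R by (simp add: psd_def)
  have cM: "M \<in> carrier_mat d d" using M by (rule hermitian_carrier)
  have col: "(\<Sum>i<d. \<Sum>j<d. R $$ (i,j) * col M k $ j * cnj (col M k $ i)) =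
      (\<Sum>i<d. \<Sum>j<d. R $$ (i,j) * M $$ (j,k) * M $$ (k,i))" if k: "k < d" for k
  proof (intro sum.cong refl)
    fix i j assume "i \<in> {..<d}" "j \<in> {..<d}"
    then show "R $$ (i,j) * col M k $ j * cnj (col M k $ i) = R $$ (i,j) * M $$ (j,k) * M $$ (k,i)"
      using k cM hermitian_index[OF M k, of i] by simp
  qed
  have "tr (R * (M * M)) = (\<Sum>i<d. \<Sum>j<d. R $$ (i,j) * (M * M) $$ (j,i))"
    using cR cM by (simp add: tr_mult)
  also have "\<dots> = (\<Sum>i<d. \<Sum>j<d. \<Sum>k<d. R $$ (i,j) * M $$ (j,k) * M $$ (k,i))"
    by (intro sum.cong refl) (simp add: index_mult_mat_sum[OF cM cM] sum_distrib_left mult.assoc)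
  also have "\<dots> = (\<Sum>k<d. \<Sum>i<d. \<Sum>j<d. R $$ (i,j) * M $$ (j,k) * M $$ (k,i))"
    by (subst sum.swap) (rule sum.cong[OF refl], rule sum.swap)
  also have "\<dots> = (\<Sum>k<d. \<Sum>i<d. \<Sum>j<d. R $$ (i,j) * col M k $ j * cnj (col M k $ i))"
    by (rule sum.cong[OF refl]) (simp only: col lessThan_iff)
  finally have "Re (tr (R * (M * M))) =
      (\<Sum>k<d. Re (\<Sum>i<d. \<Sum>j<d. R $$ (i,j) * col M k $ j * cnj (col M k $ i)))"
    by (simp only: Re_sum)
  also have "\<dots> \<ge> 0"
    using cM by (intro sum_nonneg psd_quadratic_form[OF R]) auto
  finally show ?thesis .
qed

lemma one_plus_involution_square:
  fixes A :: "'a :: comm_ring_1 mat"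
  assumes A: "A \<in> carrier_mat d d" and AA: "A * A = 1\<^sub>m d"
  shows "(1\<^sub>m d + A) * (1\<^sub>m d + A) = 2 \<cdot>\<^sub>m (1\<^sub>m d + A)"
proof -
  have IA: "1\<^sub>m d + A \<in> carrier_mat d d" using A by simp
  have "(1\<^sub>m d + A) * (1\<^sub>m d + A) = 1\<^sub>m d * (1\<^sub>m d + A) + A * (1\<^sub>m d + A)"
    by (rule add_mult_distrib_mat[OF one_carrier_mat A IA])
  also have "\<dots> = (1\<^sub>m d + A) + (A + 1\<^sub>m d)"
    by (simp add: left_mult_one_mat[OF IA] mult_add_distrib_mat[OF A one_carrier_mat A] right_mult_one_mat[OF A] AA)
  also have "\<dots> = 2 \<cdot>\<^sub>m (1\<^sub>m d + A)"
    using A by (intro eq_matI) auto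
  finally show ?thesis .
qed

lemma hermitian_one_plus_smult:
  assumes A: "hermitian d A"
  shows "hermitian d (1\<^sub>m d + complex_of_real c \<cdot>\<^sub>m A)"
  unfolding hermitian_def
proof (intro conjI allI impI)
  show "1\<^sub>m d + complex_of_real c \<cdot>\<^sub>m A \<in> carrier_mat d d"
    using hermitian_carrier[OF A] by simp
  fix i j assume "i < d" "j < d"
  then show "(1\<^sub>m d + complex_of_real c \<cdot>\<^sub>m A) $$ (i,j) = cnj ((1\<^sub>m d + complex_of_real c \<cdot>\<^sub>m A) $$ (j,i))"
    using hermitian_carrier[OF A] hermitian_index[OF A, of i j] by simp
qed

lemma density_Xi_sign_bound:
  assumes D: "density (2 ^ n) R" and P: "P \<in> paulis n" and c: "c = 1 \<or> c = -1"
  shows "0 \<le> 1 + c * Xi R P"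
proof -
  let ?d = "2 ^ n :: nat" and ?P = "pauli_mat P" and ?c = "complex_of_real c"
  let ?M = "1\<^sub>m ?d + ?c \<cdot>\<^sub>m ?P"
  have H: "hermitian ?d R" and Ps: "psd ?d R" and T: "tr R = 1"
    using D by (auto simp: density_def)
  have cR: "R \<in> carrier_mat ?d ?d" using H by (rule hermitian_carrier)
  have cP: "?P \<in> carrier_mat ?d ?d" using P by (rule pauli_mat_carrier_paulis)
  have cM: "?M \<in> carrier_mat ?d ?d" using cP by simp
  have HM: "hermitian ?d ?M"
    using P hermitian_pauli_mat[of P] by (intro hermitian_one_plus_smult) (simp add: paulis_def)
  have "?c \<cdot>\<^sub>m ?P * (?c \<cdot>\<^sub>m ?P) = (?c * ?c) \<cdot>\<^sub>m (?P * ?P)"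
    using cP by (simp add: mult_smult_assoc_mat[of _ ?d ?d] mult_smult_distrib[of _ ?d ?d] smult_smult_mat)
  also have "\<dots> = 1\<^sub>m ?d"
    using c P by (auto simp: pauli_mat_mult_self paulis_def)
  finally have MM: "?M * ?M = 2 \<cdot>\<^sub>m ?M"
    using cP by (intro one_plus_involution_square) simp_all
  have "R * ?M = R + ?c \<cdot>\<^sub>m (R * ?P)"
    by (simp add: mult_add_distrib_mat[OF cR one_carrier_mat smult_carrier_mat[OF cP]]
        right_mult_one_mat[OF cR] mult_smult_distrib[OF cR cP])
  then have "tr (R * ?M) = 1 + ?c * complex_of_real (Xi R P)"
    using cR cP T by (simp add: tr_add[of _ ?d] tr_smult[of _ ?d] of_real_Xi[OF H P])
  moreover have "tr (R * (?M * ?M)) = 2 * tr (R * ?M)"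
    using cR cM by (simp add: MM mult_smult_distrib[OF cR cM] tr_smult[of _ ?d])
  ultimately show ?thesis
    using psd_tr_mult_square[OF Ps HM] by simp
qed

lemma density_abs_Xi_le:
  assumes "density (2 ^ n) R" "P \<in> paulis n"
  shows "\<bar>Xi R P\<bar> \<le> 1"
  using density_Xi_sign_bound[OF assms, of 1] density_Xi_sign_bound[OF assms, of "-1"] by simp

section \<open>Sums of the largest values\<close>

lemma top_sum_attained:
  assumes S: "finite S" and k: "k \<le> card S"
  obtains T where "T \<subseteq> S" "card T = k" "top_sum k f S = (\<Sum>x\<in>T. f x)"
    and "\<And>T'. T' \<subseteq> S \<Longrightarrow> card T' = k \<Longrightarrow> (\<Sum>x\<in>T'. f x) \<le> top_sum k f S"
proof -
  let ?F = "{(\<Sum>x\<in>T. f x) | T. T \<subseteq> S \<and> card T = k}"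
  have "?F \<subseteq> (\<lambda>T. \<Sum>x\<in>T. f x) ` Pow S" by auto
  then have fin: "finite ?F" using S by (meson finite_Pow_iff finite_imageI finite_subset)
  obtain T0 where "T0 \<subseteq> S" "card T0 = k" using obtain_subset_with_card_n[OF k] by metis
  then have "?F \<noteq> {}" by auto
  then have "top_sum k f S \<in> ?F" unfolding top_sum_def using Max_in[OF fin] by blast
  moreover have "\<And>T'. T' \<subseteq> S \<Longrightarrow> card T' = k \<Longrightarrow> (\<Sum>x\<in>T'. f x) \<le> top_sum k f S"
    unfolding top_sum_def using fin by (auto intro!: Max_ge)
  ultimately show ?thesis using that by blast
qed

lemma top_sum_le_sum:
  assumes "finite S" "k \<le> card S" "\<And>x. x \<in> S \<Longrightarrow> 0 \<le> f x"
  shows "top_sum k f S \<le> (\<Sum>x\<in>S. f x)"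
proof -
  obtain T where "T \<subseteq> S" "top_sum k f S = (\<Sum>x\<in>T. f x)"
    using top_sum_attained[OF assms(1,2), of f] by metis
  then show ?thesis using assms by (metis DiffD1 sum_mono2)
qed

text \<open>Exchange argument: a maximising \<open>k\<close>-set \<open>T\<close> contains the \<open>k\<close> largest values, so
  with \<open>t = min f(T)\<close> the weight outside \<open>T\<close> can be moved into \<open>T\<close>, where it is paid for by
  the deficits \<open>1 - w\<close>.\<close>

lemma weighted_sum_le_top_sum:
  assumes S: "finite S" and k: "1 \<le> k" "k \<le> card S"
    and f: "\<And>x. x \<in> S \<Longrightarrow> 0 \<le> f x"
    and w: "\<And>x. x \<in> S \<Longrightarrow> 0 \<le> w x" "\<And>x. x \<in> S \<Longrightarrow> w x \<le> 1"
    and ws: "(\<Sum>x\<in>S. w x) \<le> real k"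
  shows "(\<Sum>x\<in>S. w x * f x) \<le> top_sum k f S"
proof -
  obtain T where T: "T \<subseteq> S" "card T = k" "top_sum k f S = (\<Sum>x\<in>T. f x)"
    and max: "\<And>T'. T' \<subseteq> S \<Longrightarrow> card T' = k \<Longrightarrow> (\<Sum>x\<in>T'. f x) \<le> top_sum k f S"
    using top_sum_attained[OF S k(2), of f] by metis
  have finT: "finite T" using T(1) S finite_subset by blast
  have neT: "T \<noteq> {}" using T(2) k(1) by auto
  have exch: "f y \<le> f x" if x: "x \<in> T" and y: "y \<in> S - T" for x y
  proof (rule ccontr)
    assume "\<not> f y \<le> f x"
    let ?T' = "insert y (T - {x})"
    have sub: "?T' \<subseteq> S" using T(1) x y by auto
    have card: "card ?T' = k" using finT x y T(2) k(1) by (simp add: card_insert_if)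
    have "(\<Sum>z\<in>?T'. f z) = f y + ((\<Sum>z\<in>T. f z) - f x)"
      using finT x y by (simp add: sum_diff1)
    then have "(\<Sum>z\<in>T. f z) < (\<Sum>z\<in>?T'. f z)" using \<open>\<not> f y \<le> f x\<close> by simp
    then show False using max[OF sub card] T(3) by simp
  qed
  define t where "t = Min (f ` T)"
  have t_le: "t \<le> f x" if "x \<in> T" for x using finT that unfolding t_def by simp
  have le_t: "f y \<le> t" if "y \<in> S - T" for y
    using finT neT exch that unfolding t_def by (auto intro: Min.boundedI)
  have t0: "0 \<le> t" using finT neT f T(1) unfolding t_def by (auto intro: Min.boundedI)
  have split: "(\<Sum>x\<in>S. g x) = (\<Sum>x\<in>S - T. g x) + (\<Sum>x\<in>T. g x)" for g :: "_ \<Rightarrow> real"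
    using T(1) S by (rule sum.subset_diff)
  have "(\<Sum>x\<in>S - T. w x * f x) \<le> (\<Sum>x\<in>S - T. w x * t)"
    using w le_t by (intro sum_mono mult_left_mono) auto
  also have "\<dots> = t * (\<Sum>x\<in>S - T. w x)"
    by (simp add: sum_distrib_left mult.commute)
  also have "\<dots> \<le> t * (\<Sum>x\<in>T. 1 - w x)"
    using split[of w] ws T(2) t0 by (intro mult_left_mono) (simp_all add: sum_subtractf)
  also have "\<dots> = (\<Sum>x\<in>T. t * (1 - w x))"
    by (simp add: sum_distrib_left)
  also have "\<dots> \<le> (\<Sum>x\<in>T. f x * (1 - w x))"
    using t_le w T(1) by (intro sum_mono mult_right_mono) auto
  finally have "(\<Sum>x\<in>S. w x * f x) \<le> (\<Sum>x\<in>T. f x * (1 - w x)) + (\<Sum>x\<in>T. w x * f x)"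
    using split[of "\<lambda>x. w x * f x"] by simp
  also have "\<dots> = top_sum k f S"
    using T(3) by (simp add: sum.distrib[symmetric] algebra_simps)
  finally show ?thesis .
qed

lemma pnorm_Xi2_square_le_top_sum:
  assumes R: "density (2 ^ n) R" and Ob: "hermitian (2 ^ n) Ob"
  shows "(pnorm n (Xi2 R Ob))\<^sup>2 \<le> top_sum (2 ^ n) (\<lambda>P. (Xi Ob P)\<^sup>2) (paulis n)"
proof -
  have HR: "hermitian (2 ^ n) R" using R by (simp add: density_def)
  have "(pnorm n (Xi2 R Ob))\<^sup>2 = (\<Sum>P\<in>paulis n. (Xi R P)\<^sup>2 * (Xi Ob P)\<^sup>2)"
    unfolding pnorm_square
    by (intro sum.cong refl) (simp add: Xi2_eq_mult[OF HR Ob] power_mult_distrib)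
  also have "\<dots> \<le> top_sum (2 ^ n) (\<lambda>P. (Xi Ob P)\<^sup>2) (paulis n)"
    using sum_Xi_square_density_le[OF R] density_abs_Xi_le[OF R]
    by (intro weighted_sum_le_top_sum[OF finite_paulis _ two_pow_le_card_paulis])
      (simp_all add: abs_square_le_1)
  finally show ?thesis .
qed

theorem mainTheorem17:
  fixes n :: nat
  assumes "n \<ge> 1"
  defines "d \<equiv> 2 ^ n"
  shows "(\<forall>O1 O2. hermitian d O1 \<and> hermitian d O2 \<longrightarrow>
            \<bar>pdot n (Xit O1 O2) (Xi2 O1 O2)\<bar> \<le> (pnorm n (Xit O1 O2))^2 \<and>
            (pnorm n (Xit O1 O2))^2 = (pnorm n (Xi2 O1 O2))^2)
       \<and> (\<forall>\<rho> Ob. density d \<rho> \<and> hermitian d Ob \<and> tr Ob = 0 \<longrightarrow>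
            \<bar>pdot n (Xit \<rho> Ob) (Xi2 \<rho> Ob)\<bar> \<le> (pnorm n (Xit \<rho> Ob))^2 \<and>
            (pnorm n (Xit \<rho> Ob))^2 = (pnorm n (Xi2 \<rho> Ob))^2 \<and>
            (pnorm n (Xi2 \<rho> Ob))^2 \<le> top_sum d (\<lambda>P. (Xi Ob P)^2) (paulis n) \<and>
            top_sum d (\<lambda>P. (Xi Ob P)^2) (paulis n) \<le> (pnorm n (Xi Ob))^2 \<and>
            (pnorm n (Xi Ob))^2 = real d * (hs_norm Ob)^2)"
proof -
  have twirl: "\<bar>pdot n (Xit A B) (Xi2 A B)\<bar> \<le> (pnorm n (Xit A B))\<^sup>2 \<and>
      (pnorm n (Xit A B))\<^sup>2 = (pnorm n (Xi2 A B))\<^sup>2"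
    if "hermitian d A" "hermitian d B" for A B
    using Xit_Xi2_bounds[OF hermitian_carrier hermitian_carrier] that unfolding d_def by blast
  have state: "(pnorm n (Xi2 R Ob))\<^sup>2 \<le> top_sum d (\<lambda>P. (Xi Ob P)\<^sup>2) (paulis n) \<and>
      top_sum d (\<lambda>P. (Xi Ob P)\<^sup>2) (paulis n) \<le> (pnorm n (Xi Ob))\<^sup>2 \<and>
      (pnorm n (Xi Ob))\<^sup>2 = real d * (hs_norm Ob)\<^sup>2"
    if "density d R" "hermitian d Ob" for R Ob
    using that pnorm_Xi2_square_le_top_sum[of n R Ob] sum_Xi_square[of n Ob]
      top_sum_le_sum[OF finite_paulis[of n] two_pow_le_card_paulis[of n], where f = "\<lambda>P. (Xi Ob P)\<^sup>2"]
    unfolding d_def by (simp add: pnorm_square)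
  have "hermitian d R" if "density d R" for R
    using that by (simp add: density_def)
  then show ?thesis
    using twirl state by blast
qed

end
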